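(* Let $\mathcal{H}_{A_1},\dots,\mathcal{H}_{A_N}$ be finite-dimensional Hilbert spaces and let $W_{A_1\cdots A_N}\in\mathcal{W}(\bigotimes_{i=1}^N\mathcal{H}_{A_i})$ be a beyond quantum state. Then there exists a semiquantum game $\mathbb{G}_{sq}$ and a choice of local measurements $M_{A_iA_i^o}$, $i=1,\dots,N$, such that the expected payoff obtained from $W_{A_1\cdots A_N}$ with these measurements is strictly negative, whereas for every density operator $\rho_{A_1\cdots A_N}\in\mathcal{D}(\bigotimes_{i=1}^N\mathcal{H}_{A_i})$ and every choice of local measurements (POVMs on $\mathcal{H}_{A_i}\otimes\mathcal{H}_{A_i^o}$ with outcome sets those of the game) the expected payoff is nonnegative. In short: $\mathcal{I}_{\mathbb{G}_{sq}}(W_{A_1\cdots A_N})<0$ while $\mathcal{I}_{\mathbb{G}_{sq}}(\rho_{A_1\cdots A_N})\ge0$ for all $\rho_{A_1\cdots A_N}\in\mathcal{D}(\bigotimes_{i=1}^N\mathcal{H}_{A_i})$.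
   Context: A POPT state on $\bigotimes_{i=1}^N\mathcal{H}_{A_i}$ is a Hermitian unit-trace operator $W$ with $\operatorname{Tr}[W(P_1\otimes\cdots\otimes P_N)]\ge0$ for all positive semidefinite $P_i$ on $\mathcal{H}_{A_i}$; the set of these is $\mathcal{W}(\bigotimes_i\mathcal{H}_{A_i})$. $\mathcal{D}(\bigotimes_i\mathcal{H}_{A_i})$ is the set of density operators. A beyond quantum state is an element of $\mathcal{W}\setminus\mathcal{D}$. An $N$-partite semiquantum game $\mathbb{G}_{sq}$ consists of finite-dimensional Hilbert spaces $\mathcal{H}_{A_i^o}$, finite families of pure states $\{\psi^{s_i}_{A_i^o}\}_{s_i\in\mathcal{S}_i}$ on $\mathcal{H}_{A_i^o}$ (quantum inputs), finite output sets $\mathcal{O}_i$, and a real payoff function $\beta:\times_{i=1}^N(\mathcal{S}_i\times\mathcal{O}_i)\to\mathbb{R}$. Given a (POPT or quantum) state $Z$ on $\bigotimes_i\mathcal{H}_{A_i}$ and POVMs $M_{A_iA_i^o}=\{\pi^{a_i}_{A_iA_i^o}\}_{a_i\in\mathcal{O}_i}$ on $\mathcal{H}_{A_i}\otimes\mathcal{H}_{A_i^o}$, the correlation is $p(a_1,\dots,a_N|\psi^{s_1},\dots,\psi^{s_N})=\operatorname{Tr}[(\bigotimes_i\pi^{a_i}_{A_iA_i^o})(Z\otimes\bigotimes_i\psi^{s_i}_{A_i^o})]$ (tensor factors reordered appropriately), and the expected payoff is $\mathcal{I}_{\mathbb{G}_{sq}}(Z)=\sum_{s_1,a_1,\dots,s_N,a_N}\beta(s_1,a_1,\dots,s_N,a_N)\,p(a_1,\dots,a_N|\psi^{s_1},\dots,\psi^{s_N})$.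 *)

theory Defs
  imports Complex_Main "HOL-Library.Complex_Order"
begin

text \<open>Finite-dimensional spaces are modelled by explicit orthonormal bases.
  An operator on a space with basis index set I is a function I -> I -> complex
  (matrix entries; values outside I are irrelevant).  The N-partite space
  H_{A_1} x ... x H_{A_N} with dim H_{A_i} = d i has basis index set
  tuples N (lambda i. {..<d i}) (lists of length N).\<close>

definition tuples :: "nat \<Rightarrow> (nat \<Rightarrow> 'a set) \<Rightarrow> 'a list set" where
  "tuples N S = {xs. length xs = N \<and> (\<forall>i<N. xs ! i \<in> S i)}"

definition idx :: "nat \<Rightarrow> (nat \<Rightarrow> nat) \<Rightarrow> nat list set" where
  "idx N d = tuples N (\<lambda>i. {..<d i})"

definition hermitian_on :: "'a set \<Rightarrow> ('a \<Rightarrow> 'a \<Rightarrow> complex) \<Rightarrow> bool" where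
  "hermitian_on I P \<longleftrightarrow> (\<forall>r\<in>I. \<forall>c\<in>I. P c r = cnj (P r c))"

text \<open>Positive semidefinite: all quadratic forms are (real and) nonnegative
  (complex order from HOL-Library.Complex_Order).\<close>
definition psd_on :: "'a set \<Rightarrow> ('a \<Rightarrow> 'a \<Rightarrow> complex) \<Rightarrow> bool" where
  "psd_on I P \<longleftrightarrow> (\<forall>v :: 'a \<Rightarrow> complex. 0 \<le> (\<Sum>r\<in>I. \<Sum>c\<in>I. cnj (v r) * P r c * v c))"

definition op_trace :: "'a set \<Rightarrow> ('a \<Rightarrow> 'a \<Rightarrow> complex) \<Rightarrow> complex" where
  "op_trace I P = (\<Sum>r\<in>I. P r r)"

text \<open>POPT states W(H_{A_1} x ... x H_{A_N}):
  Tr[W (P_1 x ... x P_N)] >= 0 for all PSD P_i.\<close>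
definition is_POPT :: "nat \<Rightarrow> (nat \<Rightarrow> nat) \<Rightarrow> (nat list \<Rightarrow> nat list \<Rightarrow> complex) \<Rightarrow> bool" where
  "is_POPT N d W \<longleftrightarrow> hermitian_on (idx N d) W \<and> op_trace (idx N d) W = 1 \<and>
     (\<forall>P :: nat \<Rightarrow> nat \<Rightarrow> nat \<Rightarrow> complex. (\<forall>i<N. psd_on {..<d i} (P i)) \<longrightarrow>
        0 \<le> (\<Sum>r\<in>idx N d. \<Sum>c\<in>idx N d. W r c * (\<Prod>i<N. P i (c ! i) (r ! i))))"

definition is_density :: "nat \<Rightarrow> (nat \<Rightarrow> nat) \<Rightarrow> (nat list \<Rightarrow> nat list \<Rightarrow> complex) \<Rightarrow> bool" where
  "is_density N d \<rho> \<longleftrightarrow> hermitian_on (idx N d) \<rho> \<and> psd_on (idx N d) \<rho> \<and> op_trace (idx N d) \<rho> = 1"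

definition is_POVM :: "'a set \<Rightarrow> 'b set \<Rightarrow> ('b \<Rightarrow> 'a \<Rightarrow> 'a \<Rightarrow> complex) \<Rightarrow> bool" where
  "is_POVM I Out \<pi> \<longleftrightarrow> (\<forall>a\<in>Out. psd_on I (\<pi> a)) \<and>
     (\<forall>r\<in>I. \<forall>c\<in>I. (\<Sum>a\<in>Out. \<pi> a r c) = (if r = c then 1 else 0))"

definition unit_vector :: "nat \<Rightarrow> (nat \<Rightarrow> complex) \<Rightarrow> bool" where
  "unit_vector n v \<longleftrightarrow> (\<Sum>k<n. (cmod (v k))\<^sup>2) = 1"

text \<open>Semiquantum game data: ancilla dimensions e i = dim H_{A_i^o}, finite input
  sets S i, pure input states psi i s (as unit vectors; the state is |psi><psi|),
  finite output sets Out i.  The payoff beta is an arbitrary real function on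
  (input tuple, output tuple).\<close>
definition semiquantum_game :: "nat \<Rightarrow> (nat \<Rightarrow> nat) \<Rightarrow> (nat \<Rightarrow> nat set) \<Rightarrow> (nat \<Rightarrow> nat set)
     \<Rightarrow> (nat \<Rightarrow> nat \<Rightarrow> nat \<Rightarrow> complex) \<Rightarrow> bool" where
  "semiquantum_game N e S Out \<psi> \<longleftrightarrow> (\<forall>i<N. 0 < e i \<and> finite (S i) \<and> finite (Out i) \<and>
       (\<forall>s\<in>S i. unit_vector (e i) (\<psi> i s)))"

text \<open>Local measurements: party i has a POVM on H_{A_i} x H_{A_i^o}
  (basis index set {..<d i} x {..<e i}) with outcome set Out i.\<close>
definition local_measurements :: "nat \<Rightarrow> (nat \<Rightarrow> nat) \<Rightarrow> (nat \<Rightarrow> nat) \<Rightarrow> (nat \<Rightarrow> nat set)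
     \<Rightarrow> (nat \<Rightarrow> nat \<Rightarrow> nat \<times> nat \<Rightarrow> nat \<times> nat \<Rightarrow> complex) \<Rightarrow> bool" where
  "local_measurements N d e Out M \<longleftrightarrow> (\<forall>i<N. is_POVM ({..<d i} \<times> {..<e i}) (Out i) (M i))"

text \<open>p(a|psi^s) = Tr[(x_i pi^{a_i}) (Z x (x_i |psi^{s_i}><psi^{s_i}|))], written out
  in coordinates with the tensor factors reordered party-wise.\<close>
definition correlation :: "nat \<Rightarrow> (nat \<Rightarrow> nat) \<Rightarrow> (nat \<Rightarrow> nat) \<Rightarrow> (nat \<Rightarrow> nat \<Rightarrow> nat \<Rightarrow> complex)
     \<Rightarrow> (nat \<Rightarrow> nat \<Rightarrow> nat \<times> nat \<Rightarrow> nat \<times> nat \<Rightarrow> complex) \<Rightarrow> (nat list \<Rightarrow> nat list \<Rightarrow> complex)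
     \<Rightarrow> nat list \<Rightarrow> nat list \<Rightarrow> complex" where
  "correlation N d e \<psi> M Z s a =
     (\<Sum>j\<in>idx N d. \<Sum>k\<in>idx N e. \<Sum>j'\<in>idx N d. \<Sum>k'\<in>idx N e.
        (\<Prod>i<N. M i (a ! i) (j ! i, k ! i) (j' ! i, k' ! i)) * Z j' j *
        (\<Prod>i<N. \<psi> i (s ! i) (k' ! i) * cnj (\<psi> i (s ! i) (k ! i))))"

text \<open>Expected payoff I_G(Z) = sum_{s,a} beta(s,a) p(a|s).  The probabilities are
  real for Hermitian Z; we take the real part to obtain a real-valued payoff.\<close>
definition expected_payoff :: "nat \<Rightarrow> (nat \<Rightarrow> nat) \<Rightarrow> (nat \<Rightarrow> nat) \<Rightarrow> (nat \<Rightarrow> nat set) \<Rightarrow> (nat \<Rightarrow> nat set)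
     \<Rightarrow> (nat \<Rightarrow> nat \<Rightarrow> nat \<Rightarrow> complex) \<Rightarrow> (nat list \<Rightarrow> nat list \<Rightarrow> real)
     \<Rightarrow> (nat \<Rightarrow> nat \<Rightarrow> nat \<times> nat \<Rightarrow> nat \<times> nat \<Rightarrow> complex) \<Rightarrow> (nat list \<Rightarrow> nat list \<Rightarrow> complex) \<Rightarrow> real" where
  "expected_payoff N d e S Out \<psi> \<beta> M Z =
     (\<Sum>s\<in>tuples N S. \<Sum>a\<in>tuples N Out. \<beta> s a * Re (correlation N d e \<psi> M Z s a))"

end

theory Submission
  imports Defs "HOL-Analysis.Convex" "HOL-Library.Nat_Bijection"
begin

text \<open>A unit-trace Hermitian \<open>W\<close> that is not a density operator is not positive
  semidefinite, so \<open>\<langle>v|W|v\<rangle> < 0\<close> for some \<open>v\<close>. Each party receives one of finitely many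
  pure states on a copy of its system whose projectors span all operators, so a real payoff
  supported on the all-zero outcome can be chosen whose input-weighted sum of product
  projectors is \<open>|conj v\<rangle>\<langle>conj v|\<close>. For every state \<open>Z\<close> and all local POVMs the expected
  payoff is then \<open>Tr[(E\<^sub>1 \<otimes> \<dots> \<otimes> E\<^sub>N)(Z \<otimes> |conj v\<rangle>\<langle>conj v|)]\<close>, where \<open>E\<^sub>i\<close> is the effect of
  outcome 0. For a density operator and positive effects this is nonnegative: writing each
  \<open>E\<^sub>i\<close> as a sum of rank-one terms turns it into a sum of quadratic forms of \<open>Z\<close>. For \<open>W\<close>,
  with \<open>E\<^sub>i\<close> the projector onto the maximally entangled state of \<open>A\<^sub>i\<close> and its copy, it
  equals \<open>\<langle>v|W|v\<rangle> / (d\<^sub>1 \<cdots> d\<^sub>N) < 0\<close>.\<close>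

section \<open>Finite sums over index tuples\<close>

lemma sum_of_bool_eq_mult:
  assumes "finite A" "a \<in> A"
  shows "(\<Sum>x\<in>A. of_bool (a = x) * f x) = (f a :: 'b::semiring_1)"
proof -
  have "A \<inter> {x. a = x} = {a}" using assms(2) by auto
  then show ?thesis using assms(1) by simp
qed

lemma sum_diagonal:
  assumes "finite A"
  shows "(\<Sum>p\<in>A \<times> A. of_bool (fst p = snd p) * f p) = (\<Sum>a\<in>A. f (a, a) :: 'a::comm_semiring_1)"
proof -
  have "(\<Sum>p\<in>A \<times> A. of_bool (fst p = snd p) * f p) = (\<Sum>p\<in>(\<lambda>a. (a, a)) ` A. f p)"
    by (rule sum.mono_neutral_cong_right) (use assms in auto)
  also have "\<dots> = (\<Sum>a\<in>A. f (a, a))"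
    by (simp add: sum.reindex inj_on_def)
  finally show ?thesis .
qed

lemma sum_reorder4:
  "(\<Sum>a\<in>A. \<Sum>b\<in>B. \<Sum>c\<in>C. \<Sum>e\<in>E. f a b c e) = (\<Sum>c\<in>C. \<Sum>a\<in>A. \<Sum>e\<in>E. \<Sum>b\<in>B. f a b c e)"
  by (simp only: sum.swap[where B = C] sum.swap[where A = B and B = E])

lemma tuples_0: "tuples 0 S = {[]}"
  by (auto simp: tuples_def)

lemma tuples_Suc: "tuples (Suc N) S = (\<lambda>(xs, x). xs @ [x]) ` (tuples N S \<times> S N)"
proof
  show "tuples (Suc N) S \<subseteq> (\<lambda>(xs, x). xs @ [x]) ` (tuples N S \<times> S N)"
  proof
    fix ys assume "ys \<in> tuples (Suc N) S"
    then have len: "length ys = Suc N" and mem: "\<forall>i<Suc N. ys ! i \<in> S i"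
      by (auto simp: tuples_def)
    then have "ys = butlast ys @ [last ys]"
      by (metis append_butlast_last_id list.size(3) nat.distinct(1))
    moreover have "butlast ys \<in> tuples N S"
      using len mem by (auto simp: tuples_def nth_butlast)
    moreover have "last ys \<in> S N"
      using len mem by (metis diff_Suc_1 last_conv_nth lessI list.size(3) nat.distinct(1))
    ultimately show "ys \<in> (\<lambda>(xs, x). xs @ [x]) ` (tuples N S \<times> S N)"
      by (auto intro!: image_eqI[of _ _ "(butlast ys, last ys)"])
  qed
qed (auto simp: tuples_def nth_append less_Suc_eq)

lemma finite_tuples: "(\<And>i. i < N \<Longrightarrow> finite (S i)) \<Longrightarrow> finite (tuples N S)"
  by (induction N) (simp_all add: tuples_0 tuples_Suc)

lemma finite_idx [simp]: "finite (idx N d)"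
  unfolding idx_def by (rule finite_tuples) simp

lemma idx_nth: "j \<in> idx N d \<Longrightarrow> i < N \<Longrightarrow> j ! i < d i"
  by (auto simp: idx_def tuples_def)

lemma sum_tuples_prod:
  fixes f :: "nat \<Rightarrow> 'a \<Rightarrow> 'b::comm_semiring_1"
  assumes "\<And>i. i < N \<Longrightarrow> finite (S i)"
  shows "(\<Sum>xs\<in>tuples N S. \<Prod>i<N. f i (xs ! i)) = (\<Prod>i<N. \<Sum>x\<in>S i. f i x)"
  using assms
proof (induction N)
  case 0
  then show ?case by (simp add: tuples_0)
next
  case (Suc N)
  have "(\<Sum>xs\<in>tuples (Suc N) S. \<Prod>i<Suc N. f i (xs ! i))
      = (\<Sum>(xs, x)\<in>tuples N S \<times> S N. (\<Prod>i<N. f i (xs ! i)) * f N x)"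
    unfolding tuples_Suc
    by (subst sum.reindex) (auto simp: inj_on_def tuples_def nth_append intro!: sum.cong prod.cong)
  also have "\<dots> = (\<Sum>xs\<in>tuples N S. \<Prod>i<N. f i (xs ! i)) * (\<Sum>x\<in>S N. f N x)"
    by (simp add: sum.cartesian_product sum_product)
  also have "\<dots> = (\<Prod>i<Suc N. \<Sum>x\<in>S i. f i x)"
    using Suc by simp
  finally show ?case .
qed

lemma prod_nth_eq_indicator:
  assumes "length xs = N" "length ys = N"
  shows "(\<Prod>i<N. of_bool (xs ! i = ys ! i) :: 'a::comm_semiring_1) = of_bool (xs = ys)"
  using assms by (auto simp: list_eq_iff_nth_eq intro!: prod_zero)

section \<open>Positive semidefinite kernels\<close>

lemma cnj_mult_self: "cnj z * z = of_real ((cmod z)\<^sup>2)"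
  by (metis complex_norm_square mult.commute of_real_power)

definition quad_form :: "'a set \<Rightarrow> ('a \<Rightarrow> 'a \<Rightarrow> complex) \<Rightarrow> ('a \<Rightarrow> complex) \<Rightarrow> complex" where
  "quad_form I P v = (\<Sum>r\<in>I. \<Sum>c\<in>I. cnj (v r) * P r c * v c)"

lemma psd_on_iff_quad_form: "psd_on I P \<longleftrightarrow> (\<forall>v. 0 \<le> quad_form I P v)"
  by (simp add: psd_on_def quad_form_def)

lemma quad_form_restrict:
  assumes "finite I" "J \<subseteq> I"
  shows "quad_form I P (\<lambda>r. if r \<in> J then v r else 0) = quad_form J P v"
proof -
  let ?v = "\<lambda>r. if r \<in> J then v r else 0"
  have "quad_form I P ?v = (\<Sum>r\<in>J. \<Sum>c\<in>I. cnj (?v r) * P r c * ?v c)"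
    unfolding quad_form_def by (rule sum.mono_neutral_right) (use assms in auto)
  also have "\<dots> = (\<Sum>r\<in>J. \<Sum>c\<in>J. cnj (?v r) * P r c * ?v c)"
    by (rule sum.cong[OF refl], rule sum.mono_neutral_right) (use assms in auto)
  also have "\<dots> = quad_form J P v"
    unfolding quad_form_def by (auto intro!: sum.cong)
  finally show ?thesis .
qed

lemma psd_on_subset:
  assumes "finite I" "J \<subseteq> I" "psd_on I P"
  shows "psd_on J P"
  unfolding psd_on_iff_quad_form
proof
  fix v
  show "0 \<le> quad_form J P v"
    using assms(3) quad_form_restrict[OF assms(1,2), of P v] unfolding psd_on_iff_quad_form by metis
qed

lemma psd_on_2x2:
  assumes "finite I" "psd_on I P" "r \<in> I" "c \<in> I" "r \<noteq> c"
  shows "0 \<le> cnj a * P r r * a + cnj a * P r c * b + cnj b * P c r * a + cnj b * P c c * b"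
proof -
  have "psd_on {r, c} P" using psd_on_subset[OF assms(1) _ assms(2), of "{r, c}"] assms(3,4) by blast
  then have "0 \<le> quad_form {r, c} P (\<lambda>x. if x = r then a else b)"
    unfolding psd_on_iff_quad_form by blast
  then show ?thesis using assms(5) by (simp add: quad_form_def algebra_simps)
qed

lemma psd_on_diag_nonneg:
  assumes "finite I" "psd_on I P" "r \<in> I"
  shows "0 \<le> P r r"
proof -
  have "psd_on {r} P" using psd_on_subset[OF assms(1) _ assms(2), of "{r}"] assms(3) by blast
  then have "0 \<le> quad_form {r} P (\<lambda>x. 1)" unfolding psd_on_iff_quad_form by blast
  then show ?thesis by (simp add: quad_form_def)
qed

lemma psd_on_hermitian:
  assumes "finite I" "psd_on I P" "r \<in> I" "c \<in> I"
  shows "P c r = cnj (P r c)"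
proof (cases "r = c")
  case True
  then show ?thesis using psd_on_diag_nonneg[OF assms(1-3)]
    by (simp add: less_eq_complex_def complex_eq_iff)
next
  case False
  have diag: "0 \<le> P r r" "0 \<le> P c c"
    using psd_on_diag_nonneg[OF assms(1,2)] assms(3,4) by auto
  have "0 \<le> P r r + P r c + P c r + P c c"
    using psd_on_2x2[OF assms False, of 1 1] by simp
  moreover have "0 \<le> P r r + \<i> * P r c - \<i> * P c r + P c c"
    using psd_on_2x2[OF assms False, of 1 \<i>] by (simp add: algebra_simps)
  ultimately have "Im (P r c) + Im (P c r) = 0" "Re (P r c) = Re (P c r)"
    using diag unfolding less_eq_complex_def by auto
  then show ?thesis by (simp add: complex_eq_iff)
qed

lemma psd_on_diag_zero_row:
  assumes "finite I" "psd_on I P" "x \<in> I" "c \<in> I" "P x x = 0"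
  shows "P x c = 0"
proof (rule ccontr)
  assume nz: "P x c \<noteq> 0"
  then have "x \<noteq> c" using assms(5) by auto
  define w where "w = P x c"
  define s where "s = (Re (P c c) + 1) / (2 * (cmod w)\<^sup>2)"
  define t where "t = - of_real s * w"
  \<comment> \<open>The \<open>2 \<times> 2\<close> form at \<open>(t, 1)\<close> is \<open>Re (P c c) - 2 s |w|\<^sup>2 = -1\<close>.\<close>
  have "0 \<le> cnj t * P x x * t + cnj t * P x c * 1 + cnj 1 * P c x * t + cnj 1 * P c c * 1"
    by (rule psd_on_2x2[OF assms(1-4) \<open>x \<noteq> c\<close>])
  then have "0 \<le> Re (cnj t * w + cnj w * t) + Re (P c c)"
    using assms(5) psd_on_hermitian[OF assms(1-4)] unfolding less_eq_complex_def w_def by simp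
  moreover have "Re (cnj t * w + cnj w * t) = -2 * s * (cmod w)\<^sup>2"
    using cmod_power2[of w] by (simp add: t_def algebra_simps power2_eq_square)
  moreover have "2 * s * (cmod w)\<^sup>2 = Re (P c c) + 1"
    using nz by (simp add: s_def w_def)
  ultimately show False by linarith
qed

lemma quad_form_shift:
  assumes "finite I" "x \<in> I"
  shows "quad_form I P (\<lambda>r. v r + (if r = x then t else 0)) = quad_form I P v
     + cnj t * (\<Sum>c\<in>I. P x c * v c) + t * (\<Sum>r\<in>I. cnj (v r) * P r x) + cnj t * t * P x x"
proof -
  have split: "cnj (v r + (if r = x then t else 0)) * P r c * (v c + (if c = x then t else 0)) =
     cnj (v r) * P r c * v c + (if r = x then cnj t * (P x c * v c) else 0)
     + (if c = x then t * (cnj (v r) * P r x) else 0)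
     + (if r = x then if c = x then cnj t * t * P x x else 0 else 0)" for r c
    by (cases "r = x"; cases "c = x"; simp add: algebra_simps)
  have pull_if: "(\<Sum>c\<in>I. if Q then f c else 0) = (if Q then sum f I else 0)" for Q and f :: "'a \<Rightarrow> complex"
    by simp
  show ?thesis
    unfolding quad_form_def split sum.distrib pull_if
    using assms by (simp add: sum_distrib_left)
qed

text \<open>For \<open>P x x = 0\<close> this is \<open>P\<close> itself, as division by zero yields zero.\<close>
definition schur_complement :: "'a \<Rightarrow> ('a \<Rightarrow> 'a \<Rightarrow> complex) \<Rightarrow> 'a \<Rightarrow> 'a \<Rightarrow> complex" where
  "schur_complement x P r c = P r c - P r x * P x c / P x x"

lemma psd_on_schur_complement:
  assumes fin: "finite I" and psd: "psd_on I P" and x: "x \<in> I"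
  shows "psd_on I (schur_complement x P)"
proof (cases "P x x = 0")
  case True
  then have "schur_complement x P = P" by (simp add: schur_complement_def fun_eq_iff)
  then show ?thesis using psd by simp
next
  case False
  define p where "p = P x x"
  have "cnj p = p"
    using psd_on_hermitian[OF fin psd x x] by (simp add: p_def)
  show ?thesis
    unfolding psd_on_iff_quad_form
  proof
    fix v
    \<comment> \<open>Complete the square in the coordinate \<open>x\<close>.\<close>
    define w where "w = (\<Sum>c\<in>I. P x c * v c)"
    have w': "(\<Sum>r\<in>I. cnj (v r) * P r x) = cnj w"
      unfolding w_def cnj_sum by (rule sum.cong) (auto simp: psd_on_hermitian[OF fin psd x])
    have "quad_form I (schur_complement x P) v = quad_form I P v - cnj w * w / p"
    proof -
      have "quad_form I (schur_complement x P) v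
          = quad_form I P v - (\<Sum>r\<in>I. cnj (v r) * P r x) * (\<Sum>c\<in>I. P x c * v c) / p"
        unfolding quad_form_def schur_complement_def p_def sum_product sum_divide_distrib
        by (simp add: sum_subtractf algebra_simps)
      then show ?thesis by (simp add: w' w_def)
    qed
    also have "\<dots> = quad_form I P (\<lambda>r. v r + (if r = x then - w / p else 0))"
      unfolding quad_form_shift[OF fin x] w' w_def[symmetric] p_def[symmetric]
      using False \<open>cnj p = p\<close> by (simp add: p_def field_simps)
    finally show "0 \<le> quad_form I (schur_complement x P) v"
      using psd unfolding psd_on_iff_quad_form by simp
  qed
qed

lemma schur_complement_vanishes:
  assumes fin: "finite I" and psd: "psd_on I P" and "x \<in> I" "c \<in> I"
  shows "schur_complement x P x c = 0" "schur_complement x P c x = 0"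
  using psd_on_diag_zero_row[OF assms] psd_on_diag_zero_row[OF fin psd \<open>x \<in> I\<close> \<open>x \<in> I\<close>]
    psd_on_hermitian[OF fin psd \<open>x \<in> I\<close> \<open>c \<in> I\<close>]
  by (cases "P x x = 0"; force simp: schur_complement_def)+

lemma psd_on_gram:
  assumes "finite I" "psd_on I P"
  shows "\<exists>(n::nat) b. \<forall>r\<in>I. \<forall>c\<in>I. P r c = (\<Sum>t<n. b t r * cnj (b t c))"
  using assms
proof (induction I arbitrary: P rule: finite_induct)
  case empty
  show ?case by simp
next
  case (insert x F P)
  let ?I = "insert x F" and ?S = "schur_complement x P"
  have fin: "finite ?I" and x: "x \<in> ?I" using insert.hyps by auto
  have "psd_on F ?S"
    using psd_on_subset[OF fin _ psd_on_schur_complement[OF fin insert.prems x]] by blast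
  then obtain n :: nat and b where b: "\<forall>r\<in>F. \<forall>c\<in>F. ?S r c = (\<Sum>t<n. b t r * cnj (b t c))"
    using insert.IH by blast
  define root where "root = complex_of_real (sqrt (Re (P x x)))"
  define b' where "b' t r = (if t < n then if r = x then 0 else b t r else P r x / root)" for t r
  have "P r c = (\<Sum>t<Suc n. b' t r * cnj (b' t c))" if r: "r \<in> ?I" and c: "c \<in> ?I" for r c
  proof -
    have "root * root = P x x"
      using psd_on_diag_nonneg[OF fin insert.prems x]
      by (simp add: root_def less_eq_complex_def complex_eq_iff flip: of_real_mult)
    then have "b' n r * cnj (b' n c) = P r x * P x c / P x x"
      using psd_on_hermitian[OF fin insert.prems x c] by (simp add: b'_def root_def)
    moreover have "?S r c = (\<Sum>t<n. b' t r * cnj (b' t c))"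
      using b r c insert.hyps(2) schur_complement_vanishes[OF fin insert.prems x] by (cases "r = x \<or> c = x") (auto simp: b'_def)
    ultimately show ?thesis by (simp add: schur_complement_def algebra_simps)
  qed
  then show ?case by blast
qed

lemma psd_on_gram_family:
  assumes "\<And>i. i < N \<Longrightarrow> finite (A i)" "\<And>i. i < N \<Longrightarrow> psd_on (A i) (E i)"
  shows "\<exists>(n :: nat \<Rightarrow> nat) b.
           \<forall>i<N. \<forall>p\<in>A i. \<forall>q\<in>A i. E i p q = (\<Sum>t<n i. b i t p * cnj (b i t q))"
proof -
  have "\<forall>i. \<exists>(n::nat) b. i < N \<longrightarrow> (\<forall>p\<in>A i. \<forall>q\<in>A i. E i p q = (\<Sum>t<n. b t p * cnj (b t q)))"
  proof
    fix i
    show "\<exists>(n::nat) b. i < N \<longrightarrow> (\<forall>p\<in>A i. \<forall>q\<in>A i. E i p q = (\<Sum>t<n. b t p * cnj (b t q)))"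
      using psd_on_gram[of "A i" "E i"] assms by (cases "i < N") auto
  qed
  then obtain n :: "nat \<Rightarrow> nat"
    where "\<forall>i. \<exists>b. i < N \<longrightarrow> (\<forall>p\<in>A i. \<forall>q\<in>A i. E i p q = (\<Sum>t<n i. b t p * cnj (b t q)))"
    by (rule choice[THEN exE])
  then obtain b where "\<forall>i<N. \<forall>p\<in>A i. \<forall>q\<in>A i. E i p q = (\<Sum>t<n i. b i t p * cnj (b i t q))"
    by (rule choice[THEN exE]) blast
  then show ?thesis by blast
qed

lemma hermitian_not_psd_on_negative:
  assumes "hermitian_on I W" "\<not> psd_on I W"
  obtains v where "Re (quad_form I W v) < 0"
proof -
  obtain v where v: "\<not> 0 \<le> quad_form I W v"
    using assms(2) unfolding psd_on_iff_quad_form by blast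
  have "cnj (quad_form I W v) = (\<Sum>r\<in>I. \<Sum>c\<in>I. cnj (v c) * W c r * v r)"
    unfolding quad_form_def cnj_sum
  proof (intro sum.cong refl)
    fix r c assume "r \<in> I" "c \<in> I"
    then have "W c r = cnj (W r c)"
      using assms(1) unfolding hermitian_on_def by blast
    then show "cnj (cnj (v r) * W r c * v c) = cnj (v c) * W c r * v r"
      by (simp add: mult_ac)
  qed
  also have "\<dots> = quad_form I W v"
    unfolding quad_form_def by (rule sum.swap)
  finally have "Im (quad_form I W v) = 0"
    by (simp add: complex_eq_iff)
  then have "Re (quad_form I W v) < 0"
    using v by (simp add: less_eq_complex_def)
  then show ?thesis by (rule that)
qed

section \<open>A tomographically complete family of probe states\<close>

definition triple_encode :: "nat \<times> nat \<times> nat \<Rightarrow> nat" where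
  "triple_encode t = prod_encode (fst t, prod_encode (snd t))"

definition triple_decode :: "nat \<Rightarrow> nat \<times> nat \<times> nat" where
  "triple_decode s = map_prod id prod_decode (prod_decode s)"

lemma triple_decode_encode [simp]: "triple_decode (triple_encode t) = t"
  by (simp add: triple_encode_def triple_decode_def)

lemma triple_encode_eq_iff [simp]: "triple_encode s = triple_encode t \<longleftrightarrow> s = t"
  by (metis triple_decode_encode)

text \<open>\<open>matrix_unit_coeff r c\<close> gives the coefficients of the matrix unit \<open>|r\<rangle>\<langle>c|\<close> in the
  projectors onto the probe states, which therefore span all operators.\<close>

definition probes :: "nat \<Rightarrow> nat set" where
  "probes D = triple_encode ` ({..<D} \<times> {..<D} \<times> {..<4})"

definition probe :: "nat \<Rightarrow> nat \<Rightarrow> complex" where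
  "probe s p = (case triple_decode s of (k, l, m) \<Rightarrow>
     if k = l then of_bool (p = k) else (of_bool (p = k) + \<i> ^ m * of_bool (p = l)) / sqrt 2)"

definition matrix_unit_coeff :: "nat \<Rightarrow> nat \<Rightarrow> nat \<Rightarrow> complex" where
  "matrix_unit_coeff r c s = (case triple_decode s of (k, l, m) \<Rightarrow>
     if k = r \<and> l = c then if k = l then of_bool (m = 0) else \<i> ^ m / 2 else 0)"

lemma finite_probes: "finite (probes D)"
  by (simp add: probes_def)

lemma probe_unit_vector:
  assumes "s \<in> probes D"
  shows "unit_vector D (probe s)"
proof -
  obtain k l m where s: "s = triple_encode (k, l, m)" "k < D" "l < D"
    using assms by (auto simp: probes_def)
  have norm_sq: "(cmod (probe s p))\<^sup>2 = (if k = l then of_bool (p = k) else (of_bool (p = k) + of_bool (p = l)) / 2)" for p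
    using s by (cases "p = k"; cases "p = l") (auto simp: probe_def norm_divide norm_power power_divide)
  show ?thesis
    unfolding unit_vector_def norm_sq using s
    by (cases "k = l") (simp_all add: sum.distrib of_bool_def flip: sum_divide_distrib)
qed

lemma matrix_unit_expansion:
  assumes "r < D" "c < D"
  shows "(\<Sum>s\<in>probes D. matrix_unit_coeff r c s * (probe s p * cnj (probe s q)))
       = of_bool (p = r) * of_bool (q = c)"
proof -
  let ?h = "\<lambda>s. probe s p * cnj (probe s q)"
  have "(\<Sum>s\<in>probes D. matrix_unit_coeff r c s * ?h s)
      = (\<Sum>s\<in>(\<lambda>m. triple_encode (r, c, m)) ` {..<4}. matrix_unit_coeff r c s * ?h s)"
    by (rule sum.mono_neutral_right) (auto simp: probes_def matrix_unit_coeff_def assms image_iff)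
  also have "\<dots> = (\<Sum>m<4. matrix_unit_coeff r c (triple_encode (r, c, m)) * ?h (triple_encode (r, c, m)))"
    by (simp add: sum.reindex inj_on_def)
  also have "\<dots> = of_bool (p = r) * of_bool (q = c)"
  proof -
    have "complex_of_real (sqrt 2) * complex_of_real (sqrt 2) = 2"
      by (simp flip: of_real_mult)
    moreover have "\<i> ^ 3 = - \<i>"
      by (simp add: power3_eq_cube)
    moreover have "{..<4::nat} = {0, 1, 2, 3}"
      by auto
    ultimately show ?thesis
      by (cases "p = r"; cases "p = c"; cases "q = r"; cases "q = c"; cases "r = c")
        (simp_all add: matrix_unit_coeff_def probe_def field_simps power2_eq_square)
  qed
  finally show ?thesis .
qed

section \<open>The maximally entangled effect\<close>

text \<open>The projector onto \<open>(\<Sum>a<D. |a a\<rangle>) / \<surd>D\<close>.\<close>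
definition max_entangled :: "nat \<Rightarrow> nat \<times> nat \<Rightarrow> nat \<times> nat \<Rightarrow> complex" where
  "max_entangled D p q = of_bool (fst p = snd p) * of_bool (fst q = snd q) / of_nat D"

definition bell_povm :: "nat \<Rightarrow> nat \<Rightarrow> nat \<times> nat \<Rightarrow> nat \<times> nat \<Rightarrow> complex" where
  "bell_povm D a = (if a = 0 then max_entangled D else (\<lambda>p q. of_bool (p = q) - max_entangled D p q))"

lemma quad_form_max_entangled:
  "quad_form ({..<D} \<times> {..<D}) (max_entangled D) v = of_real ((cmod (\<Sum>a<D. v (a, a)))\<^sup>2 / D)"
proof -
  let ?I = "{..<D} \<times> {..<D}"
  have "quad_form ?I (max_entangled D) v
      = (\<Sum>p\<in>?I. of_bool (fst p = snd p) * cnj (v p)) * (\<Sum>q\<in>?I. of_bool (fst q = snd q) * v q) / of_nat D"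
    unfolding quad_form_def max_entangled_def sum_product sum_divide_distrib
    by (simp add: mult_ac)
  also have "\<dots> = cnj (\<Sum>a<D. v (a, a)) * (\<Sum>a<D. v (a, a)) / of_nat D"
    by (simp only: sum_diagonal finite_lessThan cnj_sum)
  finally show ?thesis
    by (simp only: cnj_mult_self of_real_divide of_real_of_nat_eq)
qed

lemma quad_form_identity:
  assumes "finite I"
  shows "quad_form I (\<lambda>p q. of_bool (p = q)) v = of_real (\<Sum>p\<in>I. (cmod (v p))\<^sup>2)"
proof -
  have "(\<Sum>c\<in>I. cnj (v r) * of_bool (r = c) * v c) = of_real ((cmod (v r))\<^sup>2)" if "r \<in> I" for r
  proof -
    have "(\<Sum>c\<in>I. cnj (v r) * of_bool (r = c) * v c) = (\<Sum>c\<in>I. if r = c then cnj (v r) * v r else 0)"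
      by (intro sum.cong) auto
    then show ?thesis
      using assms that by (simp add: cnj_mult_self)
  qed
  then show ?thesis
    by (simp add: quad_form_def)
qed

lemma diagonal_sum_bound:
  fixes v :: "nat \<times> nat \<Rightarrow> complex"
  shows "(cmod (\<Sum>a<D. v (a, a)))\<^sup>2 \<le> real D * (\<Sum>p\<in>{..<D} \<times> {..<D}. (cmod (v p))\<^sup>2)"
proof -
  have "(cmod (\<Sum>a<D. v (a, a)))\<^sup>2 \<le> (\<Sum>a<D. cmod (v (a, a)))\<^sup>2"
    by (simp add: norm_sum power_mono)
  also have "\<dots> \<le> real D * (\<Sum>a<D. (cmod (v (a, a)))\<^sup>2)"
    using sum_squared_le_sum_of_squares[of "\<lambda>a. cmod (v (a, a))" "{..<D}"] by (simp add: mult.commute)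
  also have "(\<Sum>a<D. (cmod (v (a, a)))\<^sup>2) = (\<Sum>p\<in>{..<D} \<times> {..<D}. of_bool (fst p = snd p) * (cmod (v p))\<^sup>2)"
    by (rule sum_diagonal[symmetric, OF finite_lessThan])
  also have "\<dots> \<le> (\<Sum>p\<in>{..<D} \<times> {..<D}. (cmod (v p))\<^sup>2)"
    by (intro sum_mono) auto
  finally show ?thesis by (simp add: mult_left_mono)
qed

lemma bell_povm_is_POVM:
  assumes "0 < D"
  shows "is_POVM ({..<D} \<times> {..<D}) {0, 1} (bell_povm D)"
proof -
  let ?I = "{..<D} \<times> {..<D}"
  have "0 \<le> quad_form ?I (\<lambda>p q. of_bool (p = q) - max_entangled D p q) v" for v
  proof -
    have "quad_form ?I (\<lambda>p q. of_bool (p = q) - max_entangled D p q) v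
        = quad_form ?I (\<lambda>p q. of_bool (p = q)) v - quad_form ?I (max_entangled D) v"
      unfolding quad_form_def by (simp add: algebra_simps sum_subtractf)
    then show ?thesis
      using diagonal_sum_bound[of v D] assms
      by (simp add: quad_form_identity quad_form_max_entangled less_eq_complex_def
          divide_le_eq mult.commute)
  qed
  then show ?thesis
    by (auto simp: is_POVM_def bell_povm_def psd_on_iff_quad_form quad_form_max_entangled less_eq_complex_def)
qed

section \<open>The witness game\<close>

definition probe_product :: "nat \<Rightarrow> nat list \<Rightarrow> nat list \<Rightarrow> nat list \<Rightarrow> complex" where
  "probe_product N s p q = (\<Prod>i<N. probe (s ! i) (p ! i) * cnj (probe (s ! i) (q ! i)))"

definition payoff_coeff :: "nat \<Rightarrow> (nat \<Rightarrow> nat) \<Rightarrow> (nat list \<Rightarrow> complex) \<Rightarrow> nat list \<Rightarrow> complex" where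
  "payoff_coeff N d v s = (\<Sum>r\<in>idx N d. \<Sum>c\<in>idx N d.
     cnj (v r) * v c * (\<Prod>i<N. matrix_unit_coeff (r ! i) (c ! i) (s ! i)))"

lemma sum_payoff_coeff_probe_product:
  assumes k: "k \<in> idx N d" and k': "k' \<in> idx N d"
  shows "(\<Sum>s\<in>tuples N (\<lambda>i. probes (d i)). payoff_coeff N d v s * probe_product N s k' k)
       = cnj (v k') * v k"
proof -
  let ?T = "tuples N (\<lambda>i. probes (d i))" and ?I = "idx N d"
  have unit: "(\<Sum>s\<in>?T. (\<Prod>i<N. matrix_unit_coeff (r ! i) (c ! i) (s ! i)) * probe_product N s k' k)
      = of_bool (k' = r) * of_bool (k = c)" if r: "r \<in> ?I" and c: "c \<in> ?I" for r c
  proof -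
    have "(\<Sum>s\<in>?T. (\<Prod>i<N. matrix_unit_coeff (r ! i) (c ! i) (s ! i)) * probe_product N s k' k)
        = (\<Prod>i<N. \<Sum>x\<in>probes (d i).
             matrix_unit_coeff (r ! i) (c ! i) x * (probe x (k' ! i) * cnj (probe x (k ! i))))"
      unfolding probe_product_def prod.distrib[symmetric]
      by (rule sum_tuples_prod) (simp add: finite_probes)
    also have "\<dots> = (\<Prod>i<N. of_bool (k' ! i = r ! i)) * (\<Prod>i<N. of_bool (k ! i = c ! i))"
      by (simp add: matrix_unit_expansion idx_nth[OF r] idx_nth[OF c] prod.distrib)
    also have "\<dots> = of_bool (k' = r) * of_bool (k = c)"
      using r c k k' by (simp add: prod_nth_eq_indicator idx_def tuples_def)
    finally show ?thesis .
  qed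
  have "(\<Sum>s\<in>?T. payoff_coeff N d v s * probe_product N s k' k)
      = (\<Sum>r\<in>?I. \<Sum>c\<in>?I. cnj (v r) * v c
          * (\<Sum>s\<in>?T. (\<Prod>i<N. matrix_unit_coeff (r ! i) (c ! i) (s ! i)) * probe_product N s k' k))"
    unfolding payoff_coeff_def sum_distrib_left sum_distrib_right
    by (simp add: sum.swap[where A = ?T] mult.assoc)
  also have "\<dots> = (\<Sum>r\<in>?I. \<Sum>c\<in>?I. cnj (v r) * v c * (of_bool (k' = r) * of_bool (k = c)))"
    by (simp add: unit)
  also have "\<dots> = (\<Sum>r\<in>?I. of_bool (k' = r) * (\<Sum>c\<in>?I. of_bool (k = c) * (cnj (v r) * v c)))"
    by (simp add: sum_distrib_left mult_ac)
  also have "\<dots> = cnj (v k') * v k"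
    using k k' by (simp add: sum_of_bool_eq_mult)
  finally show ?thesis .
qed

lemma sum_Re_payoff_coeff_probe_product:
  assumes "k \<in> idx N d" "k' \<in> idx N d"
  shows "(\<Sum>s\<in>tuples N (\<lambda>i. probes (d i)). of_real (Re (payoff_coeff N d v s)) * probe_product N s k' k)
       = cnj (v k') * v k"
proof -
  let ?T = "tuples N (\<lambda>i. probes (d i))"
  have "(\<Sum>s\<in>?T. cnj (payoff_coeff N d v s) * probe_product N s k' k)
      = cnj (\<Sum>s\<in>?T. payoff_coeff N d v s * probe_product N s k k')"
    by (simp add: probe_product_def mult.commute)
  also have "\<dots> = cnj (v k') * v k"
    by (simp add: sum_payoff_coeff_probe_product assms mult.commute)
  finally have conj: "(\<Sum>s\<in>?T. cnj (payoff_coeff N d v s) * probe_product N s k' k) = cnj (v k') * v k" .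
  have re: "of_real (Re z) = (z + cnj z) / 2" for z
    by (simp add: complex_add_cnj)
  have "(\<Sum>s\<in>?T. of_real (Re (payoff_coeff N d v s)) * probe_product N s k' k)
      = ((\<Sum>s\<in>?T. payoff_coeff N d v s * probe_product N s k' k)
         + (\<Sum>s\<in>?T. cnj (payoff_coeff N d v s) * probe_product N s k' k)) / 2"
    unfolding re by (simp add: sum.distrib[symmetric] sum_divide_distrib algebra_simps)
  then show ?thesis
    unfolding conj sum_payoff_coeff_probe_product[OF assms] by simp
qed

definition witness_payoff :: "nat \<Rightarrow> (nat \<Rightarrow> nat) \<Rightarrow> (nat list \<Rightarrow> complex) \<Rightarrow> nat list \<Rightarrow> nat list \<Rightarrow> real" where
  "witness_payoff N d v s a = (if a = replicate N 0 then Re (payoff_coeff N d v s) else 0)"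

text \<open>\<open>Tr[(E\<^sub>1 \<otimes> \<dots> \<otimes> E\<^sub>N)(Z \<otimes> |conj v\<rangle>\<langle>conj v|)]\<close>, with the tensor factors
  grouped party-wise as in \<^const>\<open>correlation\<close>.\<close>
definition tensor_effect_trace :: "nat \<Rightarrow> (nat \<Rightarrow> nat) \<Rightarrow> (nat \<Rightarrow> nat \<times> nat \<Rightarrow> nat \<times> nat \<Rightarrow> complex)
    \<Rightarrow> (nat list \<Rightarrow> nat list \<Rightarrow> complex) \<Rightarrow> (nat list \<Rightarrow> complex) \<Rightarrow> complex" where
  "tensor_effect_trace N d E Z v = (\<Sum>j\<in>idx N d. \<Sum>k\<in>idx N d. \<Sum>j'\<in>idx N d. \<Sum>k'\<in>idx N d.
     (\<Prod>i<N. E i (j ! i, k ! i) (j' ! i, k' ! i)) * Z j' j * (cnj (v k') * v k))"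

lemma expected_payoff_witness_payoff:
  "expected_payoff N d d (\<lambda>i. probes (d i)) (\<lambda>i. {0, 1}) (\<lambda>i. probe) (witness_payoff N d v) M Z
     = Re (tensor_effect_trace N d (\<lambda>i. M i 0) Z v)"
proof -
  let ?T = "tuples N (\<lambda>i. probes (d i))" and ?I = "idx N d" and ?a0 = "replicate N (0::nat)"
  let ?A = "\<lambda>j k j' k'. (\<Prod>i<N. M i 0 (j ! i, k ! i) (j' ! i, k' ! i)) * Z j' j"
  let ?p = "\<lambda>s. correlation N d d (\<lambda>i. probe) M Z s ?a0"
  have "?a0 \<in> tuples N (\<lambda>i. {0, 1})" and "finite (tuples N (\<lambda>i. {0::nat, 1}))"
    by (simp add: tuples_def) (rule finite_tuples, simp)
  then have "expected_payoff N d d (\<lambda>i. probes (d i)) (\<lambda>i. {0, 1}) (\<lambda>i. probe) (witness_payoff N d v) M Z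
      = Re (\<Sum>s\<in>?T. of_real (Re (payoff_coeff N d v s)) * ?p s)"
    by (simp add: expected_payoff_def witness_payoff_def if_distrib[of "\<lambda>x. x * _"] cong: if_cong)
  also have "(\<Sum>s\<in>?T. of_real (Re (payoff_coeff N d v s)) * ?p s)
      = (\<Sum>j\<in>?I. \<Sum>k\<in>?I. \<Sum>j'\<in>?I. \<Sum>k'\<in>?I.
          ?A j k j' k' * (\<Sum>s\<in>?T. of_real (Re (payoff_coeff N d v s)) * probe_product N s k' k))"
    unfolding correlation_def probe_product_def
    by (simp add: sum.swap[where A = ?T] sum_distrib_left mult_ac)
  also have "\<dots> = tensor_effect_trace N d (\<lambda>i. M i 0) Z v"
    unfolding tensor_effect_trace_def
    by (intro sum.cong refl) (simp add: sum_Re_payoff_coeff_probe_product)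
  finally show ?thesis .
qed

lemma tensor_effect_trace_max_entangled:
  "tensor_effect_trace N d (\<lambda>i. max_entangled (d i)) W v
     = of_real (\<Prod>i<N. 1 / real (d i)) * quad_form (idx N d) W v"
proof -
  let ?I = "idx N d" and ?C = "complex_of_real (\<Prod>i<N. 1 / real (d i))"
  have effect: "(\<Prod>i<N. max_entangled (d i) (j ! i, k ! i) (j' ! i, k' ! i))
      = ?C * (of_bool (j = k) * of_bool (j' = k'))"
    if "j \<in> ?I" "k \<in> ?I" "j' \<in> ?I" "k' \<in> ?I" for j k j' k'
  proof -
    have "(\<Prod>i<N. max_entangled (d i) (j ! i, k ! i) (j' ! i, k' ! i))
        = ?C * ((\<Prod>i<N. of_bool (j ! i = k ! i)) * (\<Prod>i<N. of_bool (j' ! i = k' ! i)))"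
      by (simp add: max_entangled_def prod.distrib prod_dividef of_real_prod)
    then show ?thesis
      using that by (simp add: prod_nth_eq_indicator idx_def tuples_def)
  qed
  have "tensor_effect_trace N d (\<lambda>i. max_entangled (d i)) W v
      = (\<Sum>j\<in>?I. \<Sum>j'\<in>?I. \<Sum>k\<in>?I. of_bool (j = k) * (\<Sum>k'\<in>?I. of_bool (j' = k')
           * (?C * W j' j * (cnj (v k') * v k))))"
    unfolding tensor_effect_trace_def
    by (subst sum.swap[where A = ?I and B = ?I]) (simp add: effect sum_distrib_left mult_ac cong: sum.cong)
  also have "\<dots> = (\<Sum>j\<in>?I. \<Sum>j'\<in>?I. ?C * W j' j * (cnj (v j') * v j))"
    by (intro sum.cong refl) (simp only: sum_of_bool_eq_mult finite_idx)
  also have "\<dots> = ?C * quad_form ?I W v"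
    unfolding quad_form_def sum_distrib_left by (subst sum.swap) (simp add: mult_ac)
  finally show ?thesis .
qed

lemma tensor_effect_trace_nonneg:
  assumes psd_E: "\<forall>i<N. psd_on ({..<d i} \<times> {..<d i}) (E i)" and psd_\<rho>: "psd_on (idx N d) \<rho>"
  shows "0 \<le> tensor_effect_trace N d E \<rho> v"
proof -
  let ?I = "idx N d" and ?P = "\<lambda>i. {..<d i} \<times> {..<d i}"
  have "\<exists>(n :: nat \<Rightarrow> nat) b.
      \<forall>i<N. \<forall>p\<in>?P i. \<forall>q\<in>?P i. E i p q = (\<Sum>t<n i. b i t p * cnj (b i t q))"
    by (rule psd_on_gram_family) (use psd_E in auto)
  then obtain n :: "nat \<Rightarrow> nat" and b
    where gram: "\<forall>i<N. \<forall>p\<in>?P i. \<forall>q\<in>?P i. E i p q = (\<Sum>t<n i. b i t p * cnj (b i t q))"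
    by blast
  let ?T = "tuples N (\<lambda>i. {..<n i})"
  define B where "B \<tau> j k = (\<Prod>i<N. b i (\<tau> ! i) (j ! i, k ! i))" for \<tau> j k :: "nat list"
  define u where "u \<tau> j = (\<Sum>k\<in>?I. B \<tau> j k * v k)" for \<tau> j
  have tensor_gram: "(\<Prod>i<N. E i (j ! i, k ! i) (j' ! i, k' ! i)) = (\<Sum>\<tau>\<in>?T. B \<tau> j k * cnj (B \<tau> j' k'))"
    if "j \<in> ?I" "k \<in> ?I" "j' \<in> ?I" "k' \<in> ?I" for j k j' k'
  proof -
    have "(\<Prod>i<N. E i (j ! i, k ! i) (j' ! i, k' ! i))
        = (\<Prod>i<N. \<Sum>t<n i. b i t (j ! i, k ! i) * cnj (b i t (j' ! i, k' ! i)))"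
      using gram that by (simp add: idx_nth)
    also have "\<dots> = (\<Sum>\<tau>\<in>?T. B \<tau> j k * cnj (B \<tau> j' k'))"
      unfolding B_def cnj_prod prod.distrib[symmetric] by (rule sum_tuples_prod[symmetric]) simp
    finally show ?thesis .
  qed
  have "tensor_effect_trace N d E \<rho> v = (\<Sum>\<tau>\<in>?T. \<Sum>j\<in>?I. \<Sum>k\<in>?I. \<Sum>j'\<in>?I. \<Sum>k'\<in>?I.
      B \<tau> j k * cnj (B \<tau> j' k') * \<rho> j' j * (cnj (v k') * v k))"
    unfolding tensor_effect_trace_def
    by (simp add: tensor_gram sum_distrib_right sum.swap[where B = ?T] cong: sum.cong)
  also have "\<dots> = (\<Sum>\<tau>\<in>?T. quad_form ?I \<rho> (u \<tau>))"
    unfolding quad_form_def u_def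
    by (rule sum.cong[OF refl], subst sum_reorder4) (simp add: sum_distrib_left sum_distrib_right mult_ac)
  finally show ?thesis
    using psd_\<rho> unfolding psd_on_iff_quad_form by (simp add: sum_nonneg)
qed

lemma expected_payoff_witness_bell:
  "expected_payoff N d d (\<lambda>i. probes (d i)) (\<lambda>i. {0, 1}) (\<lambda>i. probe) (witness_payoff N d v)
      (\<lambda>i. bell_povm (d i)) W
     = (\<Prod>i<N. 1 / real (d i)) * Re (quad_form (idx N d) W v)"
  unfolding expected_payoff_witness_payoff
  by (simp add: bell_povm_def tensor_effect_trace_max_entangled del: of_real_prod)

lemma expected_payoff_witness_nonneg:
  assumes "is_density N d \<rho>" "local_measurements N d d (\<lambda>i. {0, 1}) M"
  shows "0 \<le> expected_payoff N d d (\<lambda>i. probes (d i)) (\<lambda>i. {0, 1}) (\<lambda>i. probe) (witness_payoff N d v) M \<rho>"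
proof -
  have "0 \<le> tensor_effect_trace N d (\<lambda>i. M i 0) \<rho> v"
    using assms by (intro tensor_effect_trace_nonneg)
      (auto simp: is_density_def local_measurements_def is_POVM_def)
  then show ?thesis
    unfolding expected_payoff_witness_payoff by (simp add: less_eq_complex_def)
qed

theorem theorem2:
  fixes N :: nat and d :: "nat \<Rightarrow> nat" and W :: "nat list \<Rightarrow> nat list \<Rightarrow> complex"
  assumes "\<forall>i<N. 0 < d i"
    and "is_POPT N d W"
    and "\<not> is_density N d W"
  shows "\<exists>(e :: nat \<Rightarrow> nat) (S :: nat \<Rightarrow> nat set) (Out :: nat \<Rightarrow> nat set)
            (\<psi> :: nat \<Rightarrow> nat \<Rightarrow> nat \<Rightarrow> complex) (\<beta> :: nat list \<Rightarrow> nat list \<Rightarrow> real)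
            (M :: nat \<Rightarrow> nat \<Rightarrow> nat \<times> nat \<Rightarrow> nat \<times> nat \<Rightarrow> complex).
           semiquantum_game N e S Out \<psi> \<and>
           local_measurements N d e Out M \<and>
           expected_payoff N d e S Out \<psi> \<beta> M W < 0 \<and>
           (\<forall>\<rho> M'. is_density N d \<rho> \<longrightarrow> local_measurements N d e Out M' \<longrightarrow>
              0 \<le> expected_payoff N d e S Out \<psi> \<beta> M' \<rho>)"
proof -
  have "hermitian_on (idx N d) W" "\<not> psd_on (idx N d) W"
    using assms(2,3) by (auto simp: is_POPT_def is_density_def)
  then obtain v where v: "Re (quad_form (idx N d) W v) < 0"
    by (rule hermitian_not_psd_on_negative)
  have "semiquantum_game N d (\<lambda>i. probes (d i)) (\<lambda>i. {0, 1}) (\<lambda>i. probe)"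
    using assms(1) by (simp add: semiquantum_game_def finite_probes probe_unit_vector)
  moreover have "local_measurements N d d (\<lambda>i. {0, 1}) (\<lambda>i. bell_povm (d i))"
    unfolding local_measurements_def using assms(1) bell_povm_is_POVM by blast
  moreover have "expected_payoff N d d (\<lambda>i. probes (d i)) (\<lambda>i. {0, 1}) (\<lambda>i. probe)
      (witness_payoff N d v) (\<lambda>i. bell_povm (d i)) W < 0"
    unfolding expected_payoff_witness_bell using v assms(1) by (intro mult_pos_neg prod_pos) auto
  ultimately show ?thesis
    using expected_payoff_witness_nonneg by blast
qed

end
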